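(* Let $\delta_1,\delta_2$ be diagonal sections of 2-copulas. (a) For $i=1,2$ let $C_i(u_1,u_2)=\min\{u_1,u_2,(\delta_i(u_1)+\delta_i(u_2))/2\}$ be the Fredricks–Nelsen copulas. (b) Alternatively, for $i=1,2$ let $C_i$ be the Bertino copulas $C_i(u_1,u_2)=u_1-\min_{t\in[u_1,u_2]}(t-\delta_i(t))$ if $u_1\le u_2$ and $C_i(u_1,u_2)=u_2-\min_{t\in[u_2,u_1]}(t-\delta_i(t))$ if $u_2\le u_1$. In either case (a) or (b), if $C_1,C_2$ admit tail dependence functions and $C_1<_{TD}C_2$, then $C_1\le_{loc}C_2$.
   Context: A 2-copula is a grounded, 2-increasing function $C:[0,1]^2\to[0,1]$ with uniform margins; its diagonal section is $\delta(t)=C(t,t)$. The Fredricks–Nelsen and Bertino functions defined from the diagonal section of any 2-copula are 2-copulas with that diagonal. Tail dependence function: $\Lambda(\boldsymbol w;C)=\lim_{s\searrow0}C(s\boldsymbol w)/s$, $\boldsymbol w\in[0,\infty)^2$. $C_1<_{TD}C_2$ means $\Lambda(\boldsymbol w;C_1)<\Lambda(\boldsymbol w;C_2)$ for all $\boldsymbol w\in(0,\infty)^2$. $C_1\le_{loc}C_2$ means there is $\varepsilon>0$ with $C_1(\boldsymbol u)\le C_2(\boldsymbol u)$ for all $\boldsymbol u\in B_\varepsilon(\boldsymbol 0)\cap[0,1]^2$ (Euclidean ball). *)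

theory Defs
  imports "HOL-Analysis.Analysis"
begin

text \<open>A 2-copula: grounded, 2-increasing, uniform margins, values in [0,1] on the unit square.
  Only the values on [0,1]^2 are constrained.\<close>
definition copula2 :: "(real \<Rightarrow> real \<Rightarrow> real) \<Rightarrow> bool" where
  "copula2 C \<longleftrightarrow>
     (\<forall>u\<in>{0..1}. \<forall>v\<in>{0..1}. C u v \<in> {0..1}) \<and>
     (\<forall>u\<in>{0..1}. C u 0 = 0 \<and> C 0 u = 0) \<and>
     (\<forall>u\<in>{0..1}. C u 1 = u \<and> C 1 u = u) \<and>
     (\<forall>u1 u2 v1 v2. 0 \<le> u1 \<and> u1 \<le> u2 \<and> u2 \<le> 1 \<and> 0 \<le> v1 \<and> v1 \<le> v2 \<and> v2 \<le> 1 \<longrightarrow>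
        C u2 v2 - C u2 v1 - C u1 v2 + C u1 v1 \<ge> 0)"

definition diag_section :: "(real \<Rightarrow> real) \<Rightarrow> bool" where
  "diag_section \<delta> \<longleftrightarrow> (\<exists>C. copula2 C \<and> (\<forall>t\<in>{0..1}. \<delta> t = C t t))"

definition FN_copula :: "(real \<Rightarrow> real) \<Rightarrow> real \<Rightarrow> real \<Rightarrow> real" where
  "FN_copula \<delta> u1 u2 = min u1 (min u2 ((\<delta> u1 + \<delta> u2) / 2))"

text \<open>Bertino copula; the minimum over a compact interval of the continuous function
  t - delta t is written as an infimum (it is attained).\<close>
definition Bertino_copula :: "(real \<Rightarrow> real) \<Rightarrow> real \<Rightarrow> real \<Rightarrow> real" where
  "Bertino_copula \<delta> u1 u2 =
     (if u1 \<le> u2 then u1 - Inf ((\<lambda>t. t - \<delta> t) ` {u1..u2})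
      else u2 - Inf ((\<lambda>t. t - \<delta> t) ` {u2..u1}))"

definition has_tdf :: "(real \<Rightarrow> real \<Rightarrow> real) \<Rightarrow> bool" where
  "has_tdf C \<longleftrightarrow> (\<forall>w1 w2. 0 \<le> w1 \<and> 0 \<le> w2 \<longrightarrow>
      (\<exists>L. ((\<lambda>s. C (s * w1) (s * w2) / s) \<longlongrightarrow> L) (at_right 0)))"

definition tdf :: "(real \<Rightarrow> real \<Rightarrow> real) \<Rightarrow> real \<Rightarrow> real \<Rightarrow> real" where
  "tdf C w1 w2 = Lim (at_right 0) (\<lambda>s. C (s * w1) (s * w2) / s)"

definition td_less :: "(real \<Rightarrow> real \<Rightarrow> real) \<Rightarrow> (real \<Rightarrow> real \<Rightarrow> real) \<Rightarrow> bool" where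
  "td_less C1 C2 \<longleftrightarrow> (\<forall>w1 w2. 0 < w1 \<and> 0 < w2 \<longrightarrow> tdf C1 w1 w2 < tdf C2 w1 w2)"

definition loc_le :: "(real \<Rightarrow> real \<Rightarrow> real) \<Rightarrow> (real \<Rightarrow> real \<Rightarrow> real) \<Rightarrow> bool" where
  "loc_le C1 C2 \<longleftrightarrow> (\<exists>\<epsilon>>0. \<forall>u1\<in>{0..1}. \<forall>u2\<in>{0..1}.
      sqrt (u1\<^sup>2 + u2\<^sup>2) < \<epsilon> \<longrightarrow> C1 u1 u2 \<le> C2 u1 u2)"

end

theory Submission
  imports Defs
begin

text \<open>Both copulas are pointwise monotone in the diagonal section, and the tail dependence
  function on the diagonal is \<open>\<Lambda>(1,1) = lim \<delta>(s)/s\<close>. Hence \<open>C\<^sub>1 <\<^sub>T\<^sub>D C\<^sub>2\<close> forces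
  \<open>\<delta>\<^sub>1(s)/s < \<delta>\<^sub>2(s)/s\<close> for all small \<open>s > 0\<close>, so \<open>\<delta>\<^sub>1 \<le> \<delta>\<^sub>2\<close> on some \<open>[0,\<epsilon>)\<close>, and this
  gives \<open>C\<^sub>1 \<le> C\<^sub>2\<close> on the square \<open>[0,\<epsilon>)\<^sup>2\<close>, which contains the ball of radius \<open>\<epsilon>\<close>.\<close>

lemma diag_section_bounds:
  assumes "diag_section \<delta>" "t \<in> {0..1}"
  shows "0 \<le> \<delta> t" "\<delta> t \<le> t"
proof -
  obtain C where C: "copula2 C" and \<delta>: "\<delta> t = C t t"
    using assms unfolding diag_section_def by blast
  have "C t t \<in> {0..1}" "C t 1 = t" "C 0 1 = 0" "C 0 t = 0"
    using C assms(2) unfolding copula2_def by auto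
  moreover have "C t 1 - C t t - C 0 1 + C 0 t \<ge> 0"
    using C assms(2) unfolding copula2_def by (metis atLeastAtMost_iff order_refl)
  ultimately show "0 \<le> \<delta> t" "\<delta> t \<le> t"
    using \<delta> by auto
qed

lemma FN_copula_diag:
  assumes "diag_section \<delta>" "t \<in> {0..1}"
  shows "FN_copula \<delta> t t = \<delta> t"
  using diag_section_bounds[OF assms] unfolding FN_copula_def by auto

lemma Bertino_copula_diag: "Bertino_copula \<delta> t t = \<delta> t"
  unfolding Bertino_copula_def by simp

lemma FN_copula_mono:
  assumes "\<delta>1 u1 \<le> \<delta>2 u1" "\<delta>1 u2 \<le> \<delta>2 u2"
  shows "FN_copula \<delta>1 u1 u2 \<le> FN_copula \<delta>2 u1 u2"
  unfolding FN_copula_def using assms by (intro min.mono) auto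

lemma Bertino_copula_mono:
  assumes "diag_section \<delta>2" "u1 \<in> {0..1}" "u2 \<in> {0..1}"
    and le: "\<And>t. 0 \<le> t \<Longrightarrow> t \<le> max u1 u2 \<Longrightarrow> \<delta>1 t \<le> \<delta>2 t"
  shows "Bertino_copula \<delta>1 u1 u2 \<le> Bertino_copula \<delta>2 u1 u2"
proof -
  have Inf_le: "Inf ((\<lambda>t. t - \<delta>2 t) ` {a..b}) \<le> Inf ((\<lambda>t. t - \<delta>1 t) ` {a..b})"
    if "0 \<le> a" "a \<le> b" "b = max u1 u2" for a b
  proof (rule cINF_mono)
    have "\<forall>t\<in>{a..b}. 0 \<le> t - \<delta>2 t"
      using diag_section_bounds(2)[OF assms(1)] that assms(2,3) by force
    then show "bdd_below ((\<lambda>t. t - \<delta>2 t) ` {a..b})"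
      by (intro bdd_belowI2[where m = 0]) auto
  next
    fix t assume "t \<in> {a..b}"
    then show "\<exists>n\<in>{a..b}. n - \<delta>2 n \<le> t - \<delta>1 t"
      using that le by (intro bexI[of _ t]) auto
  qed (use that in simp)
  show ?thesis
    using Inf_le[of u1 u2] Inf_le[of u2 u1] assms(2,3)
    unfolding Bertino_copula_def by (auto simp: max_def)
qed

lemma tendsto_tdf_diag:
  assumes "has_tdf C" "\<And>t. t \<in> {0..1} \<Longrightarrow> C t t = \<delta> t"
  shows "((\<lambda>s. \<delta> s / s) \<longlongrightarrow> tdf C 1 1) (at_right 0)"
proof -
  obtain L where L: "((\<lambda>s. C (s * 1) (s * 1) / s) \<longlongrightarrow> L) (at_right 0)"
    using assms(1) unfolding has_tdf_def by (meson zero_le_one)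
  have "eventually (\<lambda>s. C (s * 1) (s * 1) / s = \<delta> s / s) (at_right (0::real))"
    using eventually_at_right_real[OF zero_less_one] by (rule eventually_mono) (simp add: assms(2))
  then have "((\<lambda>s. \<delta> s / s) \<longlongrightarrow> L) (at_right 0)"
    using L by (rule tendsto_cong[THEN iffD1])
  moreover have "tdf C 1 1 = L"
    unfolding tdf_def using L by (intro tendsto_Lim) simp_all
  ultimately show ?thesis by simp
qed

lemma le_near_zero_if_slope_limits_less:
  fixes f g :: "real \<Rightarrow> real"
  assumes "((\<lambda>s. f s / s) \<longlongrightarrow> L1) (at_right 0)" "((\<lambda>s. g s / s) \<longlongrightarrow> L2) (at_right 0)"
    and "L1 < L2" "f 0 \<le> g 0"
  obtains \<epsilon> where "\<epsilon> > 0" "\<And>t. 0 \<le> t \<Longrightarrow> t < \<epsilon> \<Longrightarrow> f t \<le> g t"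
proof -
  have "eventually (\<lambda>s. f s / s < (L1 + L2) / 2) (at_right 0)"
    by (rule order_tendstoD(2)[OF assms(1)]) (use assms(3) in simp)
  moreover have "eventually (\<lambda>s. (L1 + L2) / 2 < g s / s) (at_right 0)"
    by (rule order_tendstoD(1)[OF assms(2)]) (use assms(3) in simp)
  ultimately have "eventually (\<lambda>s. f s / s < g s / s) (at_right (0::real))"
    by eventually_elim linarith
  then obtain \<epsilon> where "\<epsilon> > 0" and slope: "\<And>s. 0 < s \<Longrightarrow> s < \<epsilon> \<Longrightarrow> f s / s < g s / s"
    unfolding eventually_at_right_field by auto
  moreover have "f t \<le> g t" if "0 \<le> t" "t < \<epsilon>" for t
    using that slope[of t] assms(4) by (cases "t = 0") (auto simp: divide_less_cancel)
  ultimately show ?thesis using that by blast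
qed

lemma diag_le_near_zero_if_td_less:
  assumes "has_tdf C1" "has_tdf C2" "td_less C1 C2"
    and "diag_section \<delta>1" "diag_section \<delta>2"
    and "\<And>t. t \<in> {0..1} \<Longrightarrow> C1 t t = \<delta>1 t" "\<And>t. t \<in> {0..1} \<Longrightarrow> C2 t t = \<delta>2 t"
  obtains \<epsilon> where "\<epsilon> > 0" "\<And>t. 0 \<le> t \<Longrightarrow> t < \<epsilon> \<Longrightarrow> \<delta>1 t \<le> \<delta>2 t"
proof (rule le_near_zero_if_slope_limits_less)
  show "((\<lambda>s. \<delta>1 s / s) \<longlongrightarrow> tdf C1 1 1) (at_right 0)"
       "((\<lambda>s. \<delta>2 s / s) \<longlongrightarrow> tdf C2 1 1) (at_right 0)"
    using tendsto_tdf_diag assms by blast+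
  show "tdf C1 1 1 < tdf C2 1 1"
    using assms(3) unfolding td_less_def by simp
  show "\<delta>1 0 \<le> \<delta>2 0"
    using diag_section_bounds[OF assms(4), of 0] diag_section_bounds[OF assms(5), of 0] by simp
qed (use that in blast)

lemma loc_leI:
  assumes "\<epsilon> > 0"
    and "\<And>u1 u2. u1 \<in> {0..1} \<Longrightarrow> u2 \<in> {0..1} \<Longrightarrow> u1 < \<epsilon> \<Longrightarrow> u2 < \<epsilon> \<Longrightarrow> C1 u1 u2 \<le> C2 u1 u2"
  shows "loc_le C1 C2"
  unfolding loc_le_def
proof (intro exI[of _ \<epsilon>] conjI ballI impI)
  fix u1 u2 :: real
  assume u: "u1 \<in> {0..1}" "u2 \<in> {0..1}" "sqrt (u1\<^sup>2 + u2\<^sup>2) < \<epsilon>"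
  have "u1 \<le> sqrt (u1\<^sup>2 + u2\<^sup>2)" "u2 \<le> sqrt (u1\<^sup>2 + u2\<^sup>2)"
    by (simp_all add: real_le_rsqrt)
  then show "C1 u1 u2 \<le> C2 u1 u2"
    using u(3) by (intro assms(2) u(1,2)) linarith+
qed (fact assms(1))

theorem mainTheorem7:
  fixes \<delta>1 \<delta>2 :: "real \<Rightarrow> real"
  assumes "diag_section \<delta>1" and "diag_section \<delta>2"
  shows "(has_tdf (FN_copula \<delta>1) \<and> has_tdf (FN_copula \<delta>2) \<and>
            td_less (FN_copula \<delta>1) (FN_copula \<delta>2)
          \<longrightarrow> loc_le (FN_copula \<delta>1) (FN_copula \<delta>2)) \<and>
         (has_tdf (Bertino_copula \<delta>1) \<and> has_tdf (Bertino_copula \<delta>2) \<and>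
            td_less (Bertino_copula \<delta>1) (Bertino_copula \<delta>2)
          \<longrightarrow> loc_le (Bertino_copula \<delta>1) (Bertino_copula \<delta>2))"
proof (intro conjI impI)
  assume "has_tdf (FN_copula \<delta>1) \<and> has_tdf (FN_copula \<delta>2) \<and>
    td_less (FN_copula \<delta>1) (FN_copula \<delta>2)" (is "?tdf")
  obtain \<epsilon> where "\<epsilon> > 0" and le: "\<And>t. 0 \<le> t \<Longrightarrow> t < \<epsilon> \<Longrightarrow> \<delta>1 t \<le> \<delta>2 t"
    by (rule diag_le_near_zero_if_td_less[of "FN_copula \<delta>1" "FN_copula \<delta>2" \<delta>1 \<delta>2])
      (use \<open>?tdf\<close> assms FN_copula_diag[OF assms(1)] FN_copula_diag[OF assms(2)] in auto)
  show "loc_le (FN_copula \<delta>1) (FN_copula \<delta>2)"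
    by (rule loc_leI[OF \<open>\<epsilon> > 0\<close>], rule FN_copula_mono) (auto intro: le)
next
  assume "has_tdf (Bertino_copula \<delta>1) \<and> has_tdf (Bertino_copula \<delta>2) \<and>
    td_less (Bertino_copula \<delta>1) (Bertino_copula \<delta>2)" (is "?tdf")
  obtain \<epsilon> where "\<epsilon> > 0" and le: "\<And>t. 0 \<le> t \<Longrightarrow> t < \<epsilon> \<Longrightarrow> \<delta>1 t \<le> \<delta>2 t"
    by (rule diag_le_near_zero_if_td_less[of "Bertino_copula \<delta>1" "Bertino_copula \<delta>2" \<delta>1 \<delta>2])
      (use \<open>?tdf\<close> assms Bertino_copula_diag in auto)
  show "loc_le (Bertino_copula \<delta>1) (Bertino_copula \<delta>2)"
    by (rule loc_leI[OF \<open>\<epsilon> > 0\<close>], rule Bertino_copula_mono[OF assms(2)]) (auto intro: le)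
qed

end
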